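(* Let $q$ be a real-valued query with sensitivity $1$, and let $\mathcal M_q$ be the R$^2$DP Laplace mechanism whose random scale $b$ is such that $1/b$ has moment generating function $M(t)=\mathbb E[e^{t/b}]$. Then $\mathcal M_q$ satisfies $$\Big(\alpha,\ \tfrac{1}{\alpha-1}\log\Big[\tfrac{\alpha M(\alpha-1)+(\alpha-1)M(-\alpha)}{2\alpha-1}\Big]\Big)\text{-RDP if }\alpha>1,$$ and $(1,\ M'(0)+M(-1)-1)$-RDP if $\alpha=1$.
   Context: $\mathrm{Lap}(b)$ is the zero-mean Laplace distribution with density $\frac1{2b}e^{-|x|/b}$; the R$^2$DP Laplace mechanism draws the random scale $b$ (independently of the data) and adds $\mathrm{Lap}(b)$ noise to $q(d)$. Sensitivity is $\max|q(d)-q(d')|$ over datasets $d,d'$ differing in one individual's data. For distributions $P,Q$ with densities $p,q$ the Rényi divergence of order $\alpha>1$ is $D_\alpha(P\|Q)=\frac{1}{\alpha-1}\log\int p(x)^\alpha q(x)^{1-\alpha}dx$, and $D_1$ is the Kullback–Leibler divergence. A mechanism $\mathcal M$ satisfies $(\alpha,\epsilon)$-RDP (Rényi differential privacy) if $D_\alpha(\mathcal M(d)\|\mathcal M(d'))\le\epsilon$ for all adjacent $d,d'$. *)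

theory Defs
  imports "HOL-Probability.Probability"
begin

definition lap_density :: "real \<Rightarrow> real \<Rightarrow> real" where
  "lap_density b x = 1 / (2 * b) * exp (- \<bar>x\<bar> / b)"

text \<open>R2DP Laplace mechanism: the scale b is drawn from the distribution B
  (independently of the data) and Lap(b) noise is added to q d.\<close>
definition r2dp_laplace_density :: "real measure \<Rightarrow> ('d \<Rightarrow> real) \<Rightarrow> 'd \<Rightarrow> real \<Rightarrow> real" where
  "r2dp_laplace_density B q d x = (\<integral>b. lap_density b (x - q d) \<partial>B)"

definition mgf_inv :: "real measure \<Rightarrow> real \<Rightarrow> real" where
  "mgf_inv B t = (\<integral>b. exp (t / b) \<partial>B)"

definition has_sensitivity :: "('d \<Rightarrow> 'd \<Rightarrow> bool) \<Rightarrow> ('d \<Rightarrow> real) \<Rightarrow> real \<Rightarrow> bool" where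
  "has_sensitivity adj q \<Delta> \<longleftrightarrow>
     (\<forall>d d'. adj d d' \<longrightarrow> \<bar>q d - q d'\<bar> \<le> \<Delta>) \<and> (\<exists>d d'. adj d d' \<and> \<bar>q d - q d'\<bar> = \<Delta>)"

definition renyi_div :: "real \<Rightarrow> (real \<Rightarrow> real) \<Rightarrow> (real \<Rightarrow> real) \<Rightarrow> ereal" where
  "renyi_div \<alpha> p q =
     (if \<alpha> = 1 then
        (if integrable lborel (\<lambda>x. p x * ln (p x / q x))
         then ereal (\<integral>x. p x * ln (p x / q x) \<partial>lborel) else \<infinity>)
      else
        (if integrable lborel (\<lambda>x. p x powr \<alpha> * q x powr (1 - \<alpha>))
         then ereal (1 / (\<alpha> - 1) * ln (\<integral>x. p x powr \<alpha> * q x powr (1 - \<alpha>) \<partial>lborel))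
         else \<infinity>))"

definition is_rdp :: "('d \<Rightarrow> 'd \<Rightarrow> bool) \<Rightarrow> ('d \<Rightarrow> real \<Rightarrow> real) \<Rightarrow> real \<Rightarrow> real \<Rightarrow> bool" where
  "is_rdp adj mech \<alpha> \<epsilon> \<longleftrightarrow> (\<forall>d d'. adj d d' \<longrightarrow> renyi_div \<alpha> (mech d) (mech d') \<le> ereal \<epsilon>)"

end

theory Submission
  imports Defs "HOL-Real_Asymp.Real_Asymp"
begin

text \<open>For a fixed scale \<open>b\<close> everything is explicit: for Laplace densities \<open>p\<close>, \<open>q\<close> centred at
  distance \<open>D\<close>, the integral of \<open>p powr \<alpha> * q powr (1 - \<alpha>)\<close> is
  \<open>(\<alpha> exp ((\<alpha> - 1) D / b) + (\<alpha> - 1) exp (- \<alpha> D / b)) / (2 \<alpha> - 1)\<close> and the Kullback-Leibler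
  divergence is \<open>D / b + exp (- D / b) - 1\<close>; both increase with \<open>D\<close>, so sensitivity 1 lets us
  take \<open>D = 1\<close>. The output density of the mechanism is the mixture over \<open>b\<close> of such densities.
  Because \<open>u powr \<alpha> * v powr (1 - \<alpha>)\<close> (for \<open>\<alpha> \<ge> 1\<close>) and \<open>u ln (u / v) - u + v\<close> are jointly
  convex and positively homogeneous, the integrand for the two mixtures is bounded pointwise by the
  average over \<open>b\<close> of the fixed-scale integrands (Hoelder's and the log-sum inequality).
  Integrating over \<open>x\<close> first (Tonelli) and then averaging the closed forms over \<open>b\<close> yields the
  moment generating function \<open>M\<close> of \<open>1 / b\<close>; for \<open>\<alpha> = 1\<close> the mean \<open>E[1 / b]\<close> appears as \<open>M'(0)\<close>.\<close>

section \<open>Calculus on the real line\<close>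

lemma nn_integral_FTC_atMost:
  fixes f F :: "real \<Rightarrow> real"
  assumes f_borel: "f \<in> borel_measurable borel"
    and deriv: "\<And>x. x \<le> a \<Longrightarrow> (F has_real_derivative f x) (at x)"
    and nonneg: "\<And>x. x \<le> a \<Longrightarrow> 0 \<le> f x"
    and lim: "(F \<longlongrightarrow> T) at_bot"
  shows "(\<integral>\<^sup>+x. ennreal (f x) * indicator {..a} x \<partial>lborel) = F a - T"
proof -
  have "(\<integral>\<^sup>+x. ennreal (f x) * indicator {..a} x \<partial>lborel)
      = (\<integral>\<^sup>+y. ennreal (f (- y)) * indicator {- a..} y \<partial>lborel)"
    using nn_integral_real_affine[of "\<lambda>x. ennreal (f x) * indicator {..a} x" "-1" 0] f_borel
    by (simp add: indicator_def minus_le_iff)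
  also have "\<dots> = ennreal (- T - (- F (- (- a))))"
  proof (rule nn_integral_FTC_atLeast[where F="\<lambda>y. - F (- y)"])
    show "((\<lambda>y. - F (- y)) has_real_derivative f (- y)) (at y)" if "- a \<le> y" for y
      using DERIV_minus[OF DERIV_chain2[OF deriv[of "- y"] DERIV_minus[OF DERIV_ident]]] that by simp
    show "((\<lambda>y. - F (- y)) \<longlongrightarrow> - T) at_top"
      using lim by (intro tendsto_minus filterlim_compose[OF _ filterlim_uminus_at_bot_at_top])
  qed (use f_borel nonneg in auto)
  also have "\<dots> = ennreal (F a - T)"
    by simp
  finally show ?thesis .
qed

lemma nn_integral_FTC_piecewise:
  fixes f FL FM FR :: "real \<Rightarrow> real"
  assumes "a \<le> c" and f_borel: "f \<in> borel_measurable borel" and nonneg: "\<And>x. 0 \<le> f x"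
    and FL: "\<And>x. x \<le> a \<Longrightarrow> (FL has_real_derivative f x) (at x)" "(FL \<longlongrightarrow> 0) at_bot"
    and FM: "\<And>x. a \<le> x \<Longrightarrow> x \<le> c \<Longrightarrow> (FM has_real_derivative f x) (at x)"
    and FR: "\<And>x. c \<le> x \<Longrightarrow> (FR has_real_derivative f x) (at x)" "(FR \<longlongrightarrow> 0) at_top"
  shows "(\<integral>\<^sup>+x. f x \<partial>lborel) = ennreal (FL a + (FM c - FM a) - FR c)"
proof -
  have "(\<integral>\<^sup>+x. f x \<partial>lborel) = (\<integral>\<^sup>+x. ennreal (f x) * indicator {..a} x
      + ennreal (f x) * indicator {a..c} x + ennreal (f x) * indicator {c..} x \<partial>lborel)"
    using AE_lborel_singleton[of a] AE_lborel_singleton[of c]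
    by (intro nn_integral_cong_AE, eventually_elim) (use \<open>a \<le> c\<close> in \<open>auto split: split_indicator\<close>)
  also have "\<dots> = (\<integral>\<^sup>+x. ennreal (f x) * indicator {..a} x \<partial>lborel)
      + (\<integral>\<^sup>+x. ennreal (f x) * indicator {a..c} x \<partial>lborel)
      + (\<integral>\<^sup>+x. ennreal (f x) * indicator {c..} x \<partial>lborel)"
    using f_borel by (simp add: nn_integral_add)
  also have "\<dots> = ennreal (FL a) + ennreal (FM c - FM a) + ennreal (- FR c)"
  proof -
    have "(\<integral>\<^sup>+x. ennreal (f x) * indicator {..a} x \<partial>lborel) = ennreal (FL a)"
      using nn_integral_FTC_atMost[where F=FL and T=0 and a=a] f_borel FL nonneg by simp
    moreover have "(\<integral>\<^sup>+x. ennreal (f x) * indicator {a..c} x \<partial>lborel) = ennreal (FM c - FM a)"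
      using FM nonneg by (intro nn_integral_FTC_Icc f_borel \<open>a \<le> c\<close>) auto
    moreover have "(\<integral>\<^sup>+x. ennreal (f x) * indicator {c..} x \<partial>lborel) = ennreal (- FR c)"
      using nn_integral_FTC_atLeast[where F=FR and T=0 and a=c] f_borel FR nonneg by simp
    ultimately show ?thesis
      by simp
  qed
  also have "\<dots> = ennreal (FL a + (FM c - FM a) - FR c)"
  proof -
    have "FL x \<le> FL a" if "x \<le> a" for x
      by (rule DERIV_nonneg_imp_nondecreasing[OF that]) (use FL(1) nonneg in blast)
    then have "0 \<le> FL a"
      by (intro tendsto_upperbound[OF FL(2)]) (auto simp: eventually_at_bot_linorder)
    moreover have "FR c \<le> FR x" if "c \<le> x" for x
      by (rule DERIV_nonneg_imp_nondecreasing[OF that]) (use FR(1) nonneg in blast)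
    then have "FR c \<le> 0"
      by (intro tendsto_lowerbound[OF FR(2)]) (auto simp: eventually_at_top_linorder)
    moreover have "FM a \<le> FM c"
      by (rule DERIV_nonneg_imp_nondecreasing[OF \<open>a \<le> c\<close>]) (use FM nonneg in blast)
    ultimately show ?thesis
      by (simp add: ennreal_plus[symmetric] del: ennreal_plus)
  qed
  finally show ?thesis .
qed

lemma abs_exp_minus_one_le:
  fixes v :: real
  shows "\<bar>exp v - 1\<bar> \<le> \<bar>v\<bar> * exp \<bar>v\<bar>"
proof (cases "0 \<le> v")
  case True
  have "exp v * (1 - v) \<le> exp v * exp (- v)"
    using exp_ge_add_one_self[of "- v"] by (intro mult_left_mono) auto
  then show ?thesis
    using True by (simp add: exp_minus algebra_simps)
next
  case False
  have "1 - exp v \<le> - v"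
    using exp_ge_add_one_self[of v] by linarith
  also have "\<dots> \<le> - v * exp (- v)"
    using False by simp
  finally show ?thesis
    using False by simp
qed

lemma powr_ge_tangent:
  fixes \<alpha> r z :: real
  assumes "1 \<le> \<alpha>" "0 < r" "0 < z"
  shows "r powr \<alpha> + \<alpha> * r powr (\<alpha> - 1) * (z - r) \<le> z powr \<alpha>"
proof -
  have "\<alpha> * r powr (\<alpha> - 1) * (z - r) \<le> z powr \<alpha> - r powr \<alpha>"
  proof (rule convex_on_imp_above_tangent[OF powr_convex[OF assms(1)]])
    show "((\<lambda>x. x powr \<alpha>) has_real_derivative \<alpha> * r powr (\<alpha> - 1)) (at r within {0<..})"
      using assms by (auto intro!: derivative_eq_intros)
  qed (use assms in \<open>auto simp: interior_open\<close>)
  then show ?thesis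
    by simp
qed

lemma kl_integrand_nonneg:
  fixes u v :: real
  assumes "0 < u" "0 < v"
  shows "0 \<le> u * ln (u / v) - u + v"
proof -
  have "1 - v / u \<le> ln (u / v)"
    using ln_le_minus_one[of "v / u"] assms by (simp add: ln_div)
  then have "u * (1 - v / u) \<le> u * ln (u / v)"
    using assms by (intro mult_left_mono) auto
  moreover have "u * (1 - v / u) = u - v"
    using assms by (simp add: field_simps)
  ultimately show ?thesis
    by linarith
qed

section \<open>Integration inequalities\<close>

lemma ennreal_le_nn_integralI:
  fixes f :: "'a \<Rightarrow> real"
  assumes "f \<in> borel_measurable M" "AE x in M. 0 \<le> f x"
    and "integrable M f \<Longrightarrow> r \<le> integral\<^sup>L M f"
  shows "ennreal r \<le> (\<integral>\<^sup>+x. f x \<partial>M)"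
proof (cases "(\<integral>\<^sup>+x. f x \<partial>M) = \<infinity>")
  case False
  then have "integrable M f"
    using assms(1,2) by (intro integrableI_nonneg) (auto simp: less_top)
  then show ?thesis
    using assms by (simp add: nn_integral_eq_integral ennreal_leI)
qed simp

lemma
  fixes f :: "'a \<Rightarrow> real" and g :: "'b \<Rightarrow> real"
  assumes f: "f \<in> borel_measurable M" "AE x in M. 0 \<le> f x"
    and g: "integrable N g" "AE y in N. 0 \<le> g y"
    and le: "(\<integral>\<^sup>+x. f x \<partial>M) \<le> (\<integral>\<^sup>+y. g y \<partial>N)"
  shows integrable_of_nn_integral_le: "integrable M f"
    and integral_le_of_nn_integral_le: "integral\<^sup>L M f \<le> integral\<^sup>L N g"
proof -
  have le': "(\<integral>\<^sup>+x. f x \<partial>M) \<le> ennreal (integral\<^sup>L N g)"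
    using le by (simp add: nn_integral_eq_integral[OF g])
  show f': "integrable M f"
    using f le_less_trans[OF le'] by (intro integrableI_nonneg) auto
  show "integral\<^sup>L M f \<le> integral\<^sup>L N g"
    using le' integral_nonneg_AE[OF g(2)] by (simp add: nn_integral_eq_integral[OF f' f(2)])
qed

lemma integral_pos_of_AE_pos:
  fixes f :: "'a \<Rightarrow> real"
  assumes "integrable M f" "AE x in M. 0 < f x" "emeasure M (space M) \<noteq> 0"
  shows "0 < integral\<^sup>L M f"
proof -
  have nonneg: "AE x in M. 0 \<le> f x"
    using assms(2) by eventually_elim simp
  have "\<not> (AE x in M. f x = 0)"
  proof
    assume "AE x in M. f x = 0"
    with assms(2) have "AE x in M. False"
      by eventually_elim simp
    then show False
      using assms(3) by (simp add: eventually_False ae_filter_eq_bot_iff)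
  qed
  then have "integral\<^sup>L M f \<noteq> 0"
    using integral_nonneg_eq_0_iff_AE[OF assms(1) nonneg] by simp
  then show ?thesis
    using integral_nonneg_AE[OF nonneg] by simp
qed

text \<open>Hoelder's inequality with exponents \<open>\<alpha>\<close> and \<open>\<alpha> / (\<alpha> - 1)\<close>, in the form of joint
  convexity of the perspective function \<open>u powr \<alpha> * v powr (1 - \<alpha>)\<close>.\<close>
lemma integral_powr_mult_powr_ge:
  fixes f g :: "'a \<Rightarrow> real"
  assumes \<alpha>: "1 \<le> \<alpha>" and f: "integrable M f" and g: "integrable M g"
    and h: "integrable M (\<lambda>x. f x powr \<alpha> * g x powr (1 - \<alpha>))"
    and f_pos: "AE x in M. 0 < f x" and g_pos: "AE x in M. 0 < g x"
    and F: "0 < integral\<^sup>L M f" and G: "0 < integral\<^sup>L M g"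
  shows "integral\<^sup>L M f powr \<alpha> * integral\<^sup>L M g powr (1 - \<alpha>) \<le> (\<integral>x. f x powr \<alpha> * g x powr (1 - \<alpha>) \<partial>M)"
proof -
  define r where "r = integral\<^sup>L M f / integral\<^sup>L M g"
  have r: "0 < r"
    using F G by (simp add: r_def)
  have "AE x in M. r powr \<alpha> * g x + \<alpha> * r powr (\<alpha> - 1) * (f x - r * g x) \<le> f x powr \<alpha> * g x powr (1 - \<alpha>)"
    using f_pos g_pos
  proof eventually_elim
    case (elim x)
    have "g x * (r powr \<alpha> + \<alpha> * r powr (\<alpha> - 1) * (f x / g x - r)) \<le> g x * (f x / g x) powr \<alpha>"
      using powr_ge_tangent[OF \<alpha> r, of "f x / g x"] elim by (intro mult_left_mono) auto
    moreover have "g x * (r powr \<alpha> + \<alpha> * r powr (\<alpha> - 1) * (f x / g x - r))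
        = r powr \<alpha> * g x + \<alpha> * r powr (\<alpha> - 1) * (f x - r * g x)"
      using elim by (simp add: field_simps)
    moreover have "g x * (f x / g x) powr \<alpha> = f x powr \<alpha> * g x powr (1 - \<alpha>)"
      using elim by (simp add: powr_divide powr_diff field_simps)
    ultimately show ?case
      by simp
  qed
  then have "(\<integral>x. r powr \<alpha> * g x + \<alpha> * r powr (\<alpha> - 1) * (f x - r * g x) \<partial>M)
      \<le> (\<integral>x. f x powr \<alpha> * g x powr (1 - \<alpha>) \<partial>M)"
    using f g h by (intro integral_mono_AE) auto
  moreover have "(\<integral>x. r powr \<alpha> * g x + \<alpha> * r powr (\<alpha> - 1) * (f x - r * g x) \<partial>M)
      = integral\<^sup>L M f powr \<alpha> * integral\<^sup>L M g powr (1 - \<alpha>)"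
    using f g F G by (simp add: r_def powr_divide powr_diff field_simps)
  ultimately show ?thesis
    by simp
qed

lemma log_sum_inequality:
  fixes f g :: "'a \<Rightarrow> real"
  assumes f: "integrable M f" and g: "integrable M g"
    and h: "integrable M (\<lambda>x. f x * ln (f x / g x) - f x + g x)"
    and f_pos: "AE x in M. 0 < f x" and g_pos: "AE x in M. 0 < g x"
    and F: "0 < integral\<^sup>L M f" and G: "0 < integral\<^sup>L M g"
  shows "integral\<^sup>L M f * ln (integral\<^sup>L M f / integral\<^sup>L M g) - integral\<^sup>L M f + integral\<^sup>L M g
       \<le> (\<integral>x. f x * ln (f x / g x) - f x + g x \<partial>M)"
proof -
  define r where "r = integral\<^sup>L M f / integral\<^sup>L M g"
  have r: "0 < r"
    using F G by (simp add: r_def)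
  have "AE x in M. f x * ln r - r * g x + g x \<le> f x * ln (f x / g x) - f x + g x"
    using f_pos g_pos
  proof eventually_elim
    case (elim x)
    have "0 \<le> f x * ln (f x / (r * g x)) - f x + r * g x"
      using elim r by (intro kl_integrand_nonneg) auto
    moreover have "ln (f x / (r * g x)) = ln (f x / g x) - ln r"
      using elim r by (simp add: ln_div ln_mult)
    ultimately show ?case
      by (simp add: algebra_simps)
  qed
  then have "(\<integral>x. f x * ln r - r * g x + g x \<partial>M) \<le> (\<integral>x. f x * ln (f x / g x) - f x + g x \<partial>M)"
    using f g h by (intro integral_mono_AE) auto
  moreover have "(\<integral>x. f x * ln r - r * g x + g x \<partial>M)
      = integral\<^sup>L M f * ln r - integral\<^sup>L M f + integral\<^sup>L M g"
    using f g G by (simp add: r_def)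
  ultimately show ?thesis
    by (simp add: r_def)
qed

lemma tendsto_integral_dominated_at:
  fixes s :: "real \<Rightarrow> 'a \<Rightarrow> real" and w f :: "'a \<Rightarrow> real"
  assumes "f \<in> borel_measurable M" "\<And>t. s t \<in> borel_measurable M" "integrable M w"
    and lim: "AE x in M. ((\<lambda>t. s t x) \<longlongrightarrow> f x) (at t0)"
    and bound: "\<forall>\<^sub>F t in at t0. AE x in M. \<bar>s t x\<bar> \<le> w x"
  shows "((\<lambda>t. \<integral>x. s t x \<partial>M) \<longlongrightarrow> (\<integral>x. f x \<partial>M)) (at t0)"
  unfolding tendsto_at_iff_sequentially comp_def
proof (intro allI impI)
  fix X :: "nat \<Rightarrow> real"
  assume "\<forall>i. X i \<in> UNIV - {t0}" "X \<longlonglongrightarrow> t0"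
  then have X: "filterlim X (at t0) sequentially"
    by (intro filterlim_atI) auto
  from filterlim_iff[THEN iffD1, OF X, rule_format, OF bound]
  obtain N where N: "\<And>n. N \<le> n \<Longrightarrow> AE x in M. \<bar>s (X n) x\<bar> \<le> w x"
    by (auto simp: eventually_sequentially)
  show "(\<lambda>n. \<integral>x. s (X n) x \<partial>M) \<longlonglongrightarrow> (\<integral>x. f x \<partial>M)"
  proof (rule LIMSEQ_offset[where k=N], rule integral_dominated_convergence[where w=w])
    show "AE x in M. (\<lambda>n. s (X (n + N)) x) \<longlonglongrightarrow> f x"
      using lim by eventually_elim (intro LIMSEQ_ignore_initial_segment filterlim_compose[OF _ X])
    show "AE x in M. norm (s (X (n + N)) x) \<le> w x" for n
      using N[of "n + N"] by simp
  qed (use assms in auto)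
qed

lemma integrable_of_integrable_exp_mult:
  fixes X :: "'a \<Rightarrow> real"
  assumes "X \<in> borel_measurable M" "0 < t"
    and "integrable M (\<lambda>x. exp (t * X x))" "integrable M (\<lambda>x. exp (- t * X x))"
  shows "integrable M X"
proof (rule Bochner_Integration.integrable_bound)
  show "integrable M (\<lambda>x. (exp (t * X x) + exp (- t * X x)) / t)"
    using assms by simp
  show "AE x in M. norm (X x) \<le> norm ((exp (t * X x) + exp (- t * X x)) / t)"
  proof (intro AE_I2)
    fix x
    have "t * \<bar>X x\<bar> \<le> exp (t * \<bar>X x\<bar>)"
      using exp_ge_add_one_self[of "t * \<bar>X x\<bar>"] by linarith
    also have "\<dots> \<le> exp (t * X x) + exp (- t * X x)"
      by (cases "0 \<le> X x") (simp_all add: add_increasing add_increasing2)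
    finally show "norm (X x) \<le> norm ((exp (t * X x) + exp (- t * X x)) / t)"
      using \<open>0 < t\<close> by (simp add: field_simps)
  qed
qed (use assms in simp)

lemma abs_exp_difference_quotient_le:
  fixes t x \<eta> :: real
  assumes "\<bar>t\<bar> \<le> \<eta>" "0 < \<eta>"
  shows "\<bar>(exp (t * x) - 1) / t\<bar> \<le> (exp (2 * \<eta> * x) + exp (- 2 * \<eta> * x)) / \<eta>"
proof (cases "t = 0")
  case False
  have "exp (\<bar>t\<bar> * \<bar>x\<bar>) \<le> exp (\<eta> * \<bar>x\<bar>)"
    using assms by (simp add: mult_right_mono)
  then have "\<bar>t * x\<bar> * exp \<bar>t * x\<bar> \<le> \<bar>t\<bar> * (\<bar>x\<bar> * exp (\<eta> * \<bar>x\<bar>))"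
    unfolding abs_mult mult.assoc by (intro mult_left_mono) auto
  then have "\<bar>exp (t * x) - 1\<bar> / \<bar>t\<bar> \<le> \<bar>x\<bar> * exp (\<eta> * \<bar>x\<bar>)"
    using abs_exp_minus_one_le[of "t * x"] False by (simp add: field_simps)
  also have "\<dots> \<le> exp (\<eta> * \<bar>x\<bar>) / \<eta> * exp (\<eta> * \<bar>x\<bar>)"
  proof -
    have "\<eta> * \<bar>x\<bar> \<le> exp (\<eta> * \<bar>x\<bar>)"
      using exp_ge_add_one_self[of "\<eta> * \<bar>x\<bar>"] by linarith
    then have "\<bar>x\<bar> \<le> exp (\<eta> * \<bar>x\<bar>) / \<eta>"
      using assms by (simp add: field_simps)
    then show ?thesis
      by (intro mult_right_mono) auto
  qed
  also have "\<dots> = exp (2 * \<eta> * \<bar>x\<bar>) / \<eta>"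
    by (simp add: exp_add[symmetric])
  also have "\<dots> \<le> (exp (2 * \<eta> * x) + exp (- 2 * \<eta> * x)) / \<eta>"
    using assms by (cases "0 \<le> x") (auto intro!: divide_right_mono)
  finally show ?thesis
    by (simp add: abs_divide)
qed (use assms in simp)

lemma mgf_has_field_derivative_0:
  fixes X :: "'a \<Rightarrow> real"
  assumes X [measurable]: "X \<in> borel_measurable M" and "0 < \<delta>"
    and exp_integrable: "\<And>t. \<bar>t\<bar> < \<delta> \<Longrightarrow> integrable M (\<lambda>x. exp (t * X x))"
  shows "((\<lambda>t. \<integral>x. exp (t * X x) \<partial>M) has_field_derivative (\<integral>x. X x \<partial>M)) (at 0)"
proof -
  define \<eta> where "\<eta> = \<delta> / 4"
  have \<eta>: "0 < \<eta>" "2 * \<eta> < \<delta>"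
    using \<open>0 < \<delta>\<close> by (auto simp: \<eta>_def)
  have near_0: "\<forall>\<^sub>F t in at (0::real). \<bar>t\<bar> < \<epsilon>" if "0 < \<epsilon>" for \<epsilon>
    unfolding eventually_at using that by (auto simp: dist_real_def)
  have quotient: "((\<integral>x. exp (t * X x) \<partial>M) - (\<integral>x. exp (0 * X x) \<partial>M)) / (t - 0)
      = (\<integral>x. (exp (t * X x) - 1) / t \<partial>M)" if "\<bar>t\<bar> < \<delta>" for t
    using exp_integrable[OF that] exp_integrable[of 0] \<open>0 < \<delta>\<close> by simp
  have "((\<lambda>t. \<integral>x. (exp (t * X x) - 1) / t \<partial>M) \<longlongrightarrow> (\<integral>x. X x \<partial>M)) (at 0)"
  proof (rule tendsto_integral_dominated_at)
    show "integrable M (\<lambda>x. (exp (2 * \<eta> * X x) + exp (- 2 * \<eta> * X x)) / \<eta>)"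
      using exp_integrable[of "2 * \<eta>"] exp_integrable[of "- 2 * \<eta>"] \<eta> by simp
    show "AE x in M. ((\<lambda>t. (exp (t * X x) - 1) / t) \<longlongrightarrow> X x) (at 0)"
    proof (intro AE_I2)
      fix x
      have "((\<lambda>t. exp (t * X x)) has_field_derivative X x) (at 0)"
        by (auto intro!: derivative_eq_intros)
      then show "((\<lambda>t. (exp (t * X x) - 1) / t) \<longlongrightarrow> X x) (at 0)"
        by (simp add: has_field_derivative_iff)
    qed
    show "\<forall>\<^sub>F t in at 0. AE x in M.
        \<bar>(exp (t * X x) - 1) / t\<bar> \<le> (exp (2 * \<eta> * X x) + exp (- 2 * \<eta> * X x)) / \<eta>"
      using near_0[OF \<open>0 < \<eta>\<close>]
      by eventually_elim (intro AE_I2 abs_exp_difference_quotient_le, auto simp: \<open>0 < \<eta>\<close>)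
  qed measurable
  then have "((\<lambda>t. ((\<integral>x. exp (t * X x) \<partial>M) - (\<integral>x. exp (0 * X x) \<partial>M)) / (t - 0))
      \<longlongrightarrow> (\<integral>x. X x \<partial>M)) (at 0)"
    by (rule Lim_transform_eventually)
      (use near_0[OF \<open>0 < \<delta>\<close>] in \<open>eventually_elim, metis quotient\<close>)
  then show ?thesis
    by (simp add: has_field_derivative_iff)
qed

lemma
  assumes sets: "sets B = sets borel"
    and "\<exists>\<delta>>0. \<forall>t. \<bar>t\<bar> < \<delta> \<longrightarrow> integrable B (\<lambda>b. exp (t / b))"
  shows integrable_inverse_of_mgf_inv: "integrable B (\<lambda>b. 1 / b)"
    and deriv_mgf_inv_0: "deriv (mgf_inv B) 0 = (\<integral>b. 1 / b \<partial>B)"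
proof -
  obtain \<delta> where "0 < \<delta>" and "\<And>t. \<bar>t\<bar> < \<delta> \<Longrightarrow> integrable B (\<lambda>b. exp (t / b))"
    using assms(2) by blast
  then have mgf: "\<And>t. \<bar>t\<bar> < \<delta> \<Longrightarrow> integrable B (\<lambda>b. exp (t * (1 / b)))"
    by simp
  have inverse: "(\<lambda>b. 1 / b) \<in> borel_measurable B"
    unfolding measurable_cong_sets[OF sets refl] by simp
  show "integrable B (\<lambda>b. 1 / b)"
    using \<open>0 < \<delta>\<close> mgf[of "\<delta> / 2"] mgf[of "- \<delta> / 2"]
    by (intro integrable_of_integrable_exp_mult[OF inverse, of "\<delta> / 2"]) auto
  have "(mgf_inv B has_field_derivative (\<integral>b. 1 / b \<partial>B)) (at 0)"
    using mgf_has_field_derivative_0[OF inverse \<open>0 < \<delta>\<close> mgf] by (simp add: mgf_inv_def[abs_def])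
  then show "deriv (mgf_inv B) 0 = (\<integral>b. 1 / b \<partial>B)"
    by (rule DERIV_imp_deriv)
qed

section \<open>Laplace densities\<close>

lemma lap_density_pos: "0 < b \<Longrightarrow> 0 < lap_density b x"
  by (simp add: lap_density_def)

lemma lap_density_powr_mult:
  assumes "0 < b"
  shows "lap_density b s powr \<alpha> * lap_density b t powr (1 - \<alpha>)
       = exp (- (\<alpha> * \<bar>s\<bar> - (\<alpha> - 1) * \<bar>t\<bar>) / b) / (2 * b)"
proof -
  have "lap_density b s powr \<alpha> * lap_density b t powr (1 - \<alpha>)
      = ((1 / (2 * b)) powr \<alpha> * (1 / (2 * b)) powr (1 - \<alpha>)) * (exp (- \<bar>s\<bar> / b * \<alpha>) * exp (- \<bar>t\<bar> / b * (1 - \<alpha>)))"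
    unfolding lap_density_def by (simp only: powr_mult exp_powr_real mult_ac)
  also have "(1 / (2 * b)) powr \<alpha> * (1 / (2 * b)) powr (1 - \<alpha>) = 1 / (2 * b)"
    using assms by (simp add: powr_add[symmetric])
  also have "exp (- \<bar>s\<bar> / b * \<alpha>) * exp (- \<bar>t\<bar> / b * (1 - \<alpha>)) = exp (- (\<alpha> * \<bar>s\<bar> - (\<alpha> - 1) * \<bar>t\<bar>) / b)"
    unfolding exp_add[symmetric] using assms by (simp add: field_simps)
  finally show ?thesis by simp
qed

lemma ln_lap_density_divide:
  assumes "0 < b"
  shows "ln (lap_density b s / lap_density b t) = (\<bar>t\<bar> - \<bar>s\<bar>) / b"
proof -
  have "lap_density b s / lap_density b t = exp ((\<bar>t\<bar> - \<bar>s\<bar>) / b)"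
    unfolding lap_density_def using assms by (simp add: exp_diff[symmetric] diff_divide_distrib)
  then show ?thesis by simp
qed

lemma nn_integral_lap_density_pair_shift:
  fixes g :: "real \<Rightarrow> real \<Rightarrow> ennreal"
  assumes [measurable]: "(\<lambda>(u, v). g u v) \<in> borel_measurable (borel \<Otimes>\<^sub>M borel)"
  shows "(\<integral>\<^sup>+x. g (lap_density b (x - a)) (lap_density b (x - c)) \<partial>lborel)
       = (\<integral>\<^sup>+y. g (lap_density b y) (lap_density b (y - \<bar>a - c\<bar>)) \<partial>lborel)"
proof -
  define s :: real where "s = (if a \<le> c then 1 else -1)"
  have "\<bar>a + s * y - a\<bar> = \<bar>y\<bar>" "\<bar>a + s * y - c\<bar> = \<bar>y - \<bar>a - c\<bar>\<bar>" for y
    by (auto simp: s_def)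
  then have "lap_density b (a + s * y - a) = lap_density b y"
    "lap_density b (a + s * y - c) = lap_density b (y - \<bar>a - c\<bar>)" for y
    by (simp_all add: lap_density_def)
  moreover have "\<bar>s\<bar> = 1"
    by (simp add: s_def)
  moreover have "(\<lambda>x. g (lap_density b (x - a)) (lap_density b (x - c))) \<in> borel_measurable borel"
    unfolding lap_density_def by measurable
  ultimately show ?thesis
    using nn_integral_real_affine[of "\<lambda>x. g (lap_density b (x - a)) (lap_density b (x - c))" s a]
    by simp
qed

definition lap_renyi_integral :: "real \<Rightarrow> real \<Rightarrow> real \<Rightarrow> real" where
  "lap_renyi_integral \<alpha> b D = (\<alpha> * exp ((\<alpha> - 1) * D / b) + (\<alpha> - 1) * exp (- \<alpha> * D / b)) / (2 * \<alpha> - 1)"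

definition lap_kl :: "real \<Rightarrow> real \<Rightarrow> real" where
  "lap_kl b D = D / b + exp (- D / b) - 1"

lemma nn_integral_lap_density_powr_shift:
  assumes b: "0 < b" and \<alpha>: "1 < 2 * \<alpha>" and D: "0 \<le> D"
  shows "(\<integral>\<^sup>+y. ennreal (lap_density b y powr \<alpha> * lap_density b (y - D) powr (1 - \<alpha>)) \<partial>lborel)
       = ennreal (exp ((\<alpha> - 1) * D / b) / 2
           + (exp ((\<alpha> - 1) * D / b) - exp (- \<alpha> * D / b)) / (2 * (2 * \<alpha> - 1)) + exp (- \<alpha> * D / b) / 2)"
proof -
  define f where "f y = lap_density b y powr \<alpha> * lap_density b (y - D) powr (1 - \<alpha>)" for y
  define FL where "FL y = exp ((y + (\<alpha> - 1) * D) / b) / 2" for y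
  define FM where "FM y = - exp (((\<alpha> - 1) * D - (2 * \<alpha> - 1) * y) / b) / (2 * (2 * \<alpha> - 1))" for y
  define FR where "FR y = - exp (- (y + (\<alpha> - 1) * D) / b) / 2" for y
  have "(\<integral>\<^sup>+y. ennreal (f y) \<partial>lborel) = ennreal (FL 0 + (FM D - FM 0) - FR D)"
  proof (rule nn_integral_FTC_piecewise[OF D])
    show "f \<in> borel_measurable borel"
      unfolding f_def lap_density_def by measurable
    show "(FL has_real_derivative f y) (at y)" if "y \<le> 0" for y
    proof -
      have f_eq: "f y = exp ((y + (\<alpha> - 1) * D) / b) / (2 * b)"
        using that D by (simp add: f_def lap_density_powr_mult[OF b] algebra_simps)
      show ?thesis
        unfolding FL_def f_eq using b by (auto intro!: derivative_eq_intros simp: field_simps)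
    qed
    show "(FM has_real_derivative f y) (at y)" if "0 \<le> y" "y \<le> D" for y
    proof -
      have f_eq: "f y = exp (((\<alpha> - 1) * D - (2 * \<alpha> - 1) * y) / b) / (2 * b)"
        using that by (simp add: f_def lap_density_powr_mult[OF b] algebra_simps)
      show ?thesis
        unfolding FM_def f_eq using b \<alpha> by (auto intro!: derivative_eq_intros) (simp add: field_simps)
    qed
    show "(FR has_real_derivative f y) (at y)" if "D \<le> y" for y
    proof -
      have f_eq: "f y = exp (- (y + (\<alpha> - 1) * D) / b) / (2 * b)"
        using that D by (simp add: f_def lap_density_powr_mult[OF b] algebra_simps)
      show ?thesis
        unfolding FR_def f_eq using b by (auto intro!: derivative_eq_intros simp: field_simps)
    qed
    show "(FL \<longlongrightarrow> 0) at_bot"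
      unfolding FL_def using b by real_asymp
    show "(FR \<longlongrightarrow> 0) at_top"
      unfolding FR_def using b by real_asymp
  qed (simp add: f_def)
  moreover have "((\<alpha> - 1) * D - (2 * \<alpha> - 1) * D) / b = - \<alpha> * D / b" "- (D + (\<alpha> - 1) * D) / b = - \<alpha> * D / b"
    by (simp_all add: algebra_simps)
  ultimately show ?thesis
    by (simp add: f_def FL_def FM_def FR_def diff_divide_distrib)
qed

lemma nn_integral_lap_density_powr:
  assumes "0 < b" and \<alpha>: "1 < 2 * \<alpha>"
  shows "(\<integral>\<^sup>+x. ennreal (lap_density b (x - a) powr \<alpha> * lap_density b (x - c) powr (1 - \<alpha>)) \<partial>lborel)
       = ennreal (lap_renyi_integral \<alpha> b \<bar>a - c\<bar>)"
proof -
  have "(\<integral>\<^sup>+x. ennreal (lap_density b (x - a) powr \<alpha> * lap_density b (x - c) powr (1 - \<alpha>)) \<partial>lborel)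
      = (\<integral>\<^sup>+y. ennreal (lap_density b y powr \<alpha> * lap_density b (y - \<bar>a - c\<bar>) powr (1 - \<alpha>)) \<partial>lborel)"
    by (rule nn_integral_lap_density_pair_shift) measurable
  also note nn_integral_lap_density_powr_shift[OF assms abs_ge_zero]
  also have "exp ((\<alpha> - 1) * \<bar>a - c\<bar> / b) / 2
      + (exp ((\<alpha> - 1) * \<bar>a - c\<bar> / b) - exp (- \<alpha> * \<bar>a - c\<bar> / b)) / (2 * (2 * \<alpha> - 1))
      + exp (- \<alpha> * \<bar>a - c\<bar> / b) / 2 = lap_renyi_integral \<alpha> b \<bar>a - c\<bar>"
    using \<alpha> by (simp add: lap_renyi_integral_def field_simps)
  finally show ?thesis .
qed

lemma nn_integral_lap_density:
  assumes "0 < b"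
  shows "(\<integral>\<^sup>+x. ennreal (lap_density b (x - a)) \<partial>lborel) = 1"
proof -
  have "lap_density b (x - a) powr 1 * lap_density b (x - a) powr (1 - 1) = lap_density b (x - a)" for x
    using lap_density_pos[OF assms, of "x - a"] by simp
  then show ?thesis
    using nn_integral_lap_density_powr[OF assms, of 1 a a] by (simp add: lap_renyi_integral_def)
qed

lemma nn_integral_lap_density_kl_shift:
  assumes b: "0 < b" and D: "0 \<le> D"
  shows "(\<integral>\<^sup>+y. ennreal (lap_density b y * ln (lap_density b y / lap_density b (y - D))
            - lap_density b y + lap_density b (y - D)) \<partial>lborel)
       = ennreal (lap_kl b D)"
proof -
  define f where "f y = lap_density b y * ln (lap_density b y / lap_density b (y - D))
      - lap_density b y + lap_density b (y - D)" for y
  define FL where "FL y = exp (y / b) * (D / b - 1) / 2 + exp ((y - D) / b) / 2" for y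
  define FM where "FM y = exp (- y / b) * (3 / 2 - D / (2 * b) + y / b) + exp ((y - D) / b) / 2" for y
  define FR where "FR y = exp (- y / b) * (D / b + 1) / 2 - exp (- (y - D) / b) / 2" for y
  have f_exp: "f y = exp (- \<bar>y\<bar> / b) / (2 * b) * ((\<bar>y - D\<bar> - \<bar>y\<bar>) / b - 1) + exp (- \<bar>y - D\<bar> / b) / (2 * b)" for y
    unfolding f_def ln_lap_density_divide[OF b] using b by (simp add: lap_density_def field_simps)
  have "(\<integral>\<^sup>+y. ennreal (f y) \<partial>lborel) = ennreal (FL 0 + (FM D - FM 0) - FR D)"
  proof (rule nn_integral_FTC_piecewise[OF D])
    show "f \<in> borel_measurable borel"
      unfolding f_def lap_density_def by measurable
    show "0 \<le> f y" for y
      unfolding f_def using b by (intro kl_integrand_nonneg lap_density_pos)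
    show "(FL has_real_derivative f y) (at y)" if "y \<le> 0" for y
    proof -
      have f_eq: "f y = exp (y / b) / (2 * b) * (D / b - 1) + exp ((y - D) / b) / (2 * b)"
        using that D by (simp add: f_exp algebra_simps)
      show ?thesis
        unfolding FL_def f_eq using b by (auto intro!: derivative_eq_intros simp: field_simps)
    qed
    show "(FM has_real_derivative f y) (at y)" if "0 \<le> y" "y \<le> D" for y
    proof -
      have f_eq: "f y = exp (- y / b) / (2 * b) * ((D - 2 * y) / b - 1) + exp ((y - D) / b) / (2 * b)"
        using that by (simp add: f_exp algebra_simps)
      show ?thesis
        unfolding FM_def f_eq using b by (auto intro!: derivative_eq_intros simp: field_simps)
    qed
    show "(FR has_real_derivative f y) (at y)" if "D \<le> y" for y
    proof -
      have f_eq: "f y = exp (- y / b) / (2 * b) * (- D / b - 1) + exp (- (y - D) / b) / (2 * b)"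
        using that D by (simp add: f_exp algebra_simps)
      show ?thesis
        unfolding FR_def f_eq using b by (auto intro!: derivative_eq_intros simp: field_simps)
    qed
    show "(FL \<longlongrightarrow> 0) at_bot"
      unfolding FL_def using b by real_asymp
    show "(FR \<longlongrightarrow> 0) at_top"
      unfolding FR_def using b by real_asymp
  qed
  also have "FL 0 + (FM D - FM 0) - FR D = lap_kl b D"
    unfolding FL_def FM_def FR_def lap_kl_def using b by (simp add: field_simps)
  finally show ?thesis
    by (simp add: f_def)
qed

lemma nn_integral_lap_density_kl:
  assumes "0 < b"
  shows "(\<integral>\<^sup>+x. ennreal (lap_density b (x - a) * ln (lap_density b (x - a) / lap_density b (x - c))
            - lap_density b (x - a) + lap_density b (x - c)) \<partial>lborel)
       = ennreal (lap_kl b \<bar>a - c\<bar>)"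
proof -
  have "(\<integral>\<^sup>+x. ennreal (lap_density b (x - a) * ln (lap_density b (x - a) / lap_density b (x - c))
            - lap_density b (x - a) + lap_density b (x - c)) \<partial>lborel)
      = (\<integral>\<^sup>+y. ennreal (lap_density b y * ln (lap_density b y / lap_density b (y - \<bar>a - c\<bar>))
            - lap_density b y + lap_density b (y - \<bar>a - c\<bar>)) \<partial>lborel)"
    by (rule nn_integral_lap_density_pair_shift) measurable
  also note nn_integral_lap_density_kl_shift[OF assms abs_ge_zero]
  finally show ?thesis .
qed

lemma lap_renyi_integral_mono:
  assumes "1 \<le> \<alpha>" "0 < b" "0 \<le> D" "D \<le> D'"
  shows "lap_renyi_integral \<alpha> b D \<le> lap_renyi_integral \<alpha> b D'"
proof -
  define h where "h t = \<alpha> * exp ((\<alpha> - 1) * t / b) + (\<alpha> - 1) * exp (- \<alpha> * t / b)" for t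
  have "h D \<le> h D'"
  proof (rule DERIV_nonneg_imp_nondecreasing[OF \<open>D \<le> D'\<close>])
    fix t assume "D \<le> t" "t \<le> D'"
    then have "- \<alpha> * t / b \<le> (\<alpha> - 1) * t / b"
      using assms by (intro divide_right_mono mult_right_mono) auto
    then have "0 \<le> \<alpha> * (\<alpha> - 1) / b * (exp ((\<alpha> - 1) * t / b) - exp (- \<alpha> * t / b))"
      using assms by (intro mult_nonneg_nonneg) auto
    moreover have "(h has_real_derivative \<alpha> * (\<alpha> - 1) / b * (exp ((\<alpha> - 1) * t / b) - exp (- \<alpha> * t / b))) (at t)"
      unfolding h_def using assms by (auto intro!: derivative_eq_intros simp: field_simps)
    ultimately show "\<exists>y. (h has_real_derivative y) (at t) \<and> 0 \<le> y"
      by blast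
  qed
  then show ?thesis
    using assms by (simp add: lap_renyi_integral_def h_def divide_right_mono)
qed

lemma lap_renyi_integral_nonneg: "1 \<le> \<alpha> \<Longrightarrow> 0 < b \<Longrightarrow> 0 \<le> D \<Longrightarrow> 0 \<le> lap_renyi_integral \<alpha> b D"
  using lap_renyi_integral_mono[of \<alpha> b 0 D] by (simp add: lap_renyi_integral_def)

lemma lap_kl_mono:
  assumes "0 < b" "0 \<le> D" "D \<le> D'"
  shows "lap_kl b D \<le> lap_kl b D'"
proof (unfold lap_kl_def, rule DERIV_nonneg_imp_nondecreasing[OF \<open>D \<le> D'\<close>])
  fix t assume "D \<le> t" "t \<le> D'"
  then have "0 \<le> (1 - exp (- t / b)) / b"
    using assms by simp
  moreover have "((\<lambda>t. t / b + exp (- t / b) - 1) has_real_derivative (1 - exp (- t / b)) / b) (at t)"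
    using assms by (auto intro!: derivative_eq_intros simp: field_simps)
  ultimately show "\<exists>y. ((\<lambda>t. t / b + exp (- t / b) - 1) has_real_derivative y) (at t) \<and> 0 \<le> y"
    by blast
qed

lemma lap_kl_nonneg: "0 < b \<Longrightarrow> 0 \<le> D \<Longrightarrow> 0 \<le> lap_kl b D"
  using lap_kl_mono[of b 0 D] by (simp add: lap_kl_def)

section \<open>Mixtures of Laplace densities\<close>

locale lap_scale_mixture = prob_space B for B :: "real measure" +
  assumes sets_B: "sets B = sets borel"
    and scale_pos: "AE b in B. 0 < b"
    and integrable_inverse_scale: "integrable B (\<lambda>b. 1 / b)"
begin

abbreviation lap_mixture :: "real \<Rightarrow> real \<Rightarrow> real" where
  "lap_mixture a x \<equiv> \<integral>b. lap_density b (x - a) \<partial>B"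

lemma borel_measurable_B: "f \<in> borel_measurable borel \<Longrightarrow> f \<in> borel_measurable B"
  by (simp add: measurable_cong_sets[OF sets_B refl])

lemma borel_measurable_lborel_B:
  "f \<in> borel_measurable (borel \<Otimes>\<^sub>M borel) \<Longrightarrow> f \<in> borel_measurable (lborel \<Otimes>\<^sub>M B)"
  by (simp add: measurable_cong_sets[OF sets_pair_measure_cong[OF sets_lborel sets_B] refl])

lemma nn_integral_lborel_B_swap:
  fixes f :: "real \<Rightarrow> real \<Rightarrow> ennreal"
  assumes "(\<lambda>(x, b). f x b) \<in> borel_measurable (borel \<Otimes>\<^sub>M borel)"
  shows "(\<integral>\<^sup>+x. (\<integral>\<^sup>+b. f x b \<partial>B) \<partial>lborel) = (\<integral>\<^sup>+b. (\<integral>\<^sup>+x. f x b \<partial>lborel) \<partial>B)"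
proof -
  interpret pair_sigma_finite lborel B
    by (simp add: pair_sigma_finite_def lborel.sigma_finite_measure_axioms sigma_finite_measure_axioms)
  show ?thesis
    using Fubini'[OF borel_measurable_lborel_B[OF assms]] by simp
qed

lemma integrable_lap_density: "integrable B (\<lambda>b. lap_density b x)"
  using integrable_inverse_scale
proof (rule Bochner_Integration.integrable_bound)
  show "(\<lambda>b. lap_density b x) \<in> borel_measurable B"
    unfolding lap_density_def by (rule borel_measurable_B) measurable
  show "AE b in B. norm (lap_density b x) \<le> norm (1 / b)"
    using scale_pos
  proof eventually_elim
    case (elim b)
    then have "1 / (2 * b) * exp (- \<bar>x\<bar> / b) \<le> 1 / b * 1"
      by (intro mult_mono) (auto simp: field_simps)
    then show ?case
      using elim by (simp add: lap_density_def)
  qed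
qed

lemma integrable_exp_neg_div_scale:
  assumes "0 \<le> s"
  shows "integrable B (\<lambda>b. exp (- s / b))"
proof (rule Bochner_Integration.integrable_bound[of B "\<lambda>_. 1"])
  show "(\<lambda>b. exp (- s / b)) \<in> borel_measurable B"
    by (rule borel_measurable_B) measurable
  show "AE b in B. norm (exp (- s / b)) \<le> norm (1::real)"
    using scale_pos by eventually_elim (use assms in simp)
qed simp

lemma
  assumes "1 < \<alpha>" "0 \<le> \<Delta>" "integrable B (\<lambda>b. exp ((\<alpha> - 1) * \<Delta> / b))"
  shows integrable_lap_renyi_integral: "integrable B (\<lambda>b. lap_renyi_integral \<alpha> b \<Delta>)"
    and integral_lap_renyi_integral: "(\<integral>b. lap_renyi_integral \<alpha> b \<Delta> \<partial>B)
      = (\<alpha> * mgf_inv B ((\<alpha> - 1) * \<Delta>) + (\<alpha> - 1) * mgf_inv B (- \<alpha> * \<Delta>)) / (2 * \<alpha> - 1)"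
  using assms integrable_exp_neg_div_scale[of "\<alpha> * \<Delta>"]
  by (simp_all add: lap_renyi_integral_def mgf_inv_def)

lemma
  assumes "0 \<le> \<Delta>"
  shows integrable_lap_kl: "integrable B (\<lambda>b. lap_kl b \<Delta>)"
    and integral_lap_kl: "(\<integral>b. lap_kl b \<Delta> \<partial>B) = \<Delta> * (\<integral>b. 1 / b \<partial>B) + mgf_inv B (- \<Delta>) - 1"
proof -
  have "integrable B (\<lambda>b. \<Delta> * (1 / b))"
    by (intro integrable_mult_right integrable_inverse_scale)
  then show "integrable B (\<lambda>b. lap_kl b \<Delta>)" "(\<integral>b. lap_kl b \<Delta> \<partial>B) = \<Delta> * (\<integral>b. 1 / b \<partial>B) + mgf_inv B (- \<Delta>) - 1"
    using integrable_exp_neg_div_scale[OF assms] integral_mult_right_zero[where M=B and c=\<Delta> and f="\<lambda>b. 1 / b"]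
    by (simp_all add: lap_kl_def mgf_inv_def prob_space)
qed

lemma lap_mixture_pos: "0 < lap_mixture a x"
  using scale_pos lap_density_pos
  by (intro integral_pos_of_AE_pos integrable_lap_density) (auto simp: emeasure_space_1 elim: eventually_mono)

lemma borel_measurable_lap_mixture [measurable]: "lap_mixture a \<in> borel_measurable borel"
proof -
  have "(\<lambda>(x, b). lap_density b (x - a)) \<in> borel_measurable (borel \<Otimes>\<^sub>M borel)"
    unfolding lap_density_def by measurable
  from borel_measurable_lebesgue_integral[OF borel_measurable_lborel_B[OF this]] show ?thesis
    by simp
qed

lemma
  shows integrable_lap_mixture: "integrable lborel (lap_mixture a)"
    and integral_lap_mixture: "(\<integral>x. lap_mixture a x \<partial>lborel) = 1"
proof -
  have "(\<integral>\<^sup>+x. ennreal (lap_mixture a x) \<partial>lborel)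
      = (\<integral>\<^sup>+x. (\<integral>\<^sup>+b. ennreal (lap_density b (x - a)) \<partial>B) \<partial>lborel)"
    using scale_pos by (intro nn_integral_cong nn_integral_eq_integral[symmetric] integrable_lap_density)
      (auto elim: eventually_mono intro: less_imp_le lap_density_pos)
  also have "\<dots> = (\<integral>\<^sup>+b. (\<integral>\<^sup>+x. ennreal (lap_density b (x - a)) \<partial>lborel) \<partial>B)"
    by (rule nn_integral_lborel_B_swap) (unfold lap_density_def, measurable)
  also have "\<dots> = 1"
    using scale_pos by (subst nn_integral_cong_AE[where v="\<lambda>_. 1"])
      (auto elim!: eventually_mono simp: nn_integral_lap_density emeasure_space_1)
  finally have nn: "(\<integral>\<^sup>+x. ennreal (lap_mixture a x) \<partial>lborel) = 1" .
  have nonneg: "AE x in lborel. 0 \<le> lap_mixture a x"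
    using lap_mixture_pos by (simp add: less_imp_le)
  show "integrable lborel (lap_mixture a)"
    using nn nonneg by (intro integrableI_nonneg) auto
  then show "(\<integral>x. lap_mixture a x \<partial>lborel) = 1"
    using nn nonneg by (simp add: nn_integral_eq_integral)
qed

lemma lap_mixture_powr_le_nn_integral:
  assumes "1 \<le> \<alpha>"
  shows "ennreal (lap_mixture a x powr \<alpha> * lap_mixture c x powr (1 - \<alpha>))
    \<le> (\<integral>\<^sup>+b. ennreal (lap_density b (x - a) powr \<alpha> * lap_density b (x - c) powr (1 - \<alpha>)) \<partial>B)"
proof (rule ennreal_le_nn_integralI)
  show "(\<lambda>b. lap_density b (x - a) powr \<alpha> * lap_density b (x - c) powr (1 - \<alpha>)) \<in> borel_measurable B"
    unfolding lap_density_def by (rule borel_measurable_B) measurable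
  show "lap_mixture a x powr \<alpha> * lap_mixture c x powr (1 - \<alpha>)
      \<le> (\<integral>b. lap_density b (x - a) powr \<alpha> * lap_density b (x - c) powr (1 - \<alpha>) \<partial>B)"
    if "integrable B (\<lambda>b. lap_density b (x - a) powr \<alpha> * lap_density b (x - c) powr (1 - \<alpha>))"
    using scale_pos
    by (intro integral_powr_mult_powr_ge assms that integrable_lap_density lap_mixture_pos)
      (auto elim: eventually_mono intro: lap_density_pos)
qed simp

lemma lap_mixture_kl_le_nn_integral:
  "ennreal (lap_mixture a x * ln (lap_mixture a x / lap_mixture c x) - lap_mixture a x + lap_mixture c x)
    \<le> (\<integral>\<^sup>+b. ennreal (lap_density b (x - a) * ln (lap_density b (x - a) / lap_density b (x - c))
        - lap_density b (x - a) + lap_density b (x - c)) \<partial>B)"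
proof (rule ennreal_le_nn_integralI)
  show "(\<lambda>b. lap_density b (x - a) * ln (lap_density b (x - a) / lap_density b (x - c))
      - lap_density b (x - a) + lap_density b (x - c)) \<in> borel_measurable B"
    unfolding lap_density_def by (rule borel_measurable_B) measurable
  show "AE b in B. 0 \<le> lap_density b (x - a) * ln (lap_density b (x - a) / lap_density b (x - c))
      - lap_density b (x - a) + lap_density b (x - c)"
    using scale_pos by eventually_elim (intro kl_integrand_nonneg lap_density_pos)
qed (use scale_pos in \<open>intro log_sum_inequality integrable_lap_density lap_mixture_pos,
  auto elim: eventually_mono intro: lap_density_pos\<close>)

lemma renyi_integral_lap_mixture_le:
  assumes \<alpha>: "1 < \<alpha>" and ac: "\<bar>a - c\<bar> \<le> \<Delta>"
    and mgf: "integrable B (\<lambda>b. exp ((\<alpha> - 1) * \<Delta> / b))"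
  defines "F \<equiv> \<lambda>x. lap_mixture a x powr \<alpha> * lap_mixture c x powr (1 - \<alpha>)"
  shows "integrable lborel F"
    and "(\<integral>x. F x \<partial>lborel) \<le> (\<alpha> * mgf_inv B ((\<alpha> - 1) * \<Delta>) + (\<alpha> - 1) * mgf_inv B (- \<alpha> * \<Delta>)) / (2 * \<alpha> - 1)"
proof -
  have \<Delta>: "0 \<le> \<Delta>"
    using ac by linarith
  have "(\<integral>\<^sup>+x. F x \<partial>lborel)
      \<le> (\<integral>\<^sup>+x. (\<integral>\<^sup>+b. ennreal (lap_density b (x - a) powr \<alpha> * lap_density b (x - c) powr (1 - \<alpha>)) \<partial>B) \<partial>lborel)"
    unfolding F_def using \<alpha> by (intro nn_integral_mono lap_mixture_powr_le_nn_integral) simp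
  also have "\<dots> = (\<integral>\<^sup>+b. (\<integral>\<^sup>+x. ennreal (lap_density b (x - a) powr \<alpha> * lap_density b (x - c) powr (1 - \<alpha>)) \<partial>lborel) \<partial>B)"
    by (rule nn_integral_lborel_B_swap) (unfold lap_density_def, measurable)
  also have "\<dots> = (\<integral>\<^sup>+b. ennreal (lap_renyi_integral \<alpha> b \<bar>a - c\<bar>) \<partial>B)"
    using scale_pos \<alpha> by (intro nn_integral_cong_AE) (auto elim!: eventually_mono simp: nn_integral_lap_density_powr)
  also have "\<dots> \<le> (\<integral>\<^sup>+b. ennreal (lap_renyi_integral \<alpha> b \<Delta>) \<partial>B)"
    using scale_pos \<alpha> ac
    by (intro nn_integral_mono_AE) (auto elim!: eventually_mono intro!: ennreal_leI lap_renyi_integral_mono)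
  finally have le: "(\<integral>\<^sup>+x. F x \<partial>lborel) \<le> (\<integral>\<^sup>+b. ennreal (lap_renyi_integral \<alpha> b \<Delta>) \<partial>B)" .
  have J: "integrable B (\<lambda>b. lap_renyi_integral \<alpha> b \<Delta>)" "AE b in B. 0 \<le> lap_renyi_integral \<alpha> b \<Delta>"
    using integrable_lap_renyi_integral[OF \<alpha> \<Delta> mgf] scale_pos \<alpha> \<Delta>
    by (auto elim!: eventually_mono intro: lap_renyi_integral_nonneg)
  have F: "F \<in> borel_measurable lborel" "AE x in lborel. 0 \<le> F x"
    unfolding F_def by simp_all
  show "integrable lborel F"
    by (rule integrable_of_nn_integral_le[OF F J le])
  have "(\<integral>x. F x \<partial>lborel) \<le> (\<integral>b. lap_renyi_integral \<alpha> b \<Delta> \<partial>B)"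
    by (rule integral_le_of_nn_integral_le[OF F J le])
  also have "\<dots> = (\<alpha> * mgf_inv B ((\<alpha> - 1) * \<Delta>) + (\<alpha> - 1) * mgf_inv B (- \<alpha> * \<Delta>)) / (2 * \<alpha> - 1)"
    by (rule integral_lap_renyi_integral[OF \<alpha> \<Delta> mgf])
  finally show "(\<integral>x. F x \<partial>lborel) \<le> (\<alpha> * mgf_inv B ((\<alpha> - 1) * \<Delta>) + (\<alpha> - 1) * mgf_inv B (- \<alpha> * \<Delta>)) / (2 * \<alpha> - 1)" .
qed

lemma kl_integrand_integral_lap_mixture_le:
  assumes ac: "\<bar>a - c\<bar> \<le> \<Delta>"
  defines "G \<equiv> \<lambda>x. lap_mixture a x * ln (lap_mixture a x / lap_mixture c x) - lap_mixture a x + lap_mixture c x"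
  shows "integrable lborel G" and "(\<integral>x. G x \<partial>lborel) \<le> (\<integral>b. lap_kl b \<Delta> \<partial>B)"
proof -
  have \<Delta>: "0 \<le> \<Delta>"
    using ac by linarith
  have "(\<integral>\<^sup>+x. G x \<partial>lborel)
      \<le> (\<integral>\<^sup>+x. (\<integral>\<^sup>+b. ennreal (lap_density b (x - a) * ln (lap_density b (x - a) / lap_density b (x - c))
          - lap_density b (x - a) + lap_density b (x - c)) \<partial>B) \<partial>lborel)"
    unfolding G_def by (intro nn_integral_mono lap_mixture_kl_le_nn_integral)
  also have "\<dots> = (\<integral>\<^sup>+b. (\<integral>\<^sup>+x. ennreal (lap_density b (x - a) * ln (lap_density b (x - a) / lap_density b (x - c))
          - lap_density b (x - a) + lap_density b (x - c)) \<partial>lborel) \<partial>B)"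
    by (rule nn_integral_lborel_B_swap) (unfold lap_density_def, measurable)
  also have "\<dots> = (\<integral>\<^sup>+b. ennreal (lap_kl b \<bar>a - c\<bar>) \<partial>B)"
    using scale_pos by (intro nn_integral_cong_AE) (auto elim!: eventually_mono simp: nn_integral_lap_density_kl)
  also have "\<dots> \<le> (\<integral>\<^sup>+b. ennreal (lap_kl b \<Delta>) \<partial>B)"
    using scale_pos ac by (intro nn_integral_mono_AE) (auto elim!: eventually_mono intro!: ennreal_leI lap_kl_mono)
  finally have le: "(\<integral>\<^sup>+x. G x \<partial>lborel) \<le> (\<integral>\<^sup>+b. ennreal (lap_kl b \<Delta>) \<partial>B)" .
  have K: "integrable B (\<lambda>b. lap_kl b \<Delta>)" "AE b in B. 0 \<le> lap_kl b \<Delta>"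
    using integrable_lap_kl[OF \<Delta>] scale_pos \<Delta> by (auto elim!: eventually_mono intro: lap_kl_nonneg)
  have G: "G \<in> borel_measurable lborel" "AE x in lborel. 0 \<le> G x"
    unfolding G_def by (simp, intro AE_I2 kl_integrand_nonneg lap_mixture_pos)
  show "integrable lborel G"
    by (rule integrable_of_nn_integral_le[OF G K le])
  show "(\<integral>x. G x \<partial>lborel) \<le> (\<integral>b. lap_kl b \<Delta> \<partial>B)"
    by (rule integral_le_of_nn_integral_le[OF G K le])
qed

lemma kl_integral_lap_mixture_le:
  assumes ac: "\<bar>a - c\<bar> \<le> \<Delta>"
  shows "integrable lborel (\<lambda>x. lap_mixture a x * ln (lap_mixture a x / lap_mixture c x))"
    and "(\<integral>x. lap_mixture a x * ln (lap_mixture a x / lap_mixture c x) \<partial>lborel)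
      \<le> \<Delta> * (\<integral>b. 1 / b \<partial>B) + mgf_inv B (- \<Delta>) - 1"
proof -
  have \<Delta>: "0 \<le> \<Delta>"
    using ac by linarith
  define G where "G x = lap_mixture a x * ln (lap_mixture a x / lap_mixture c x) - lap_mixture a x + lap_mixture c x" for x
  note G = kl_integrand_integral_lap_mixture_le[OF ac, folded G_def]
  have eq: "(\<lambda>x. lap_mixture a x * ln (lap_mixture a x / lap_mixture c x)) = (\<lambda>x. G x + lap_mixture a x - lap_mixture c x)"
    by (simp add: G_def)
  show "integrable lborel (\<lambda>x. lap_mixture a x * ln (lap_mixture a x / lap_mixture c x))"
    unfolding eq by (intro Bochner_Integration.integrable_diff Bochner_Integration.integrable_add G(1) integrable_lap_mixture)
  have "(\<integral>x. lap_mixture a x * ln (lap_mixture a x / lap_mixture c x) \<partial>lborel) = (\<integral>x. G x \<partial>lborel)"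
    unfolding eq by (simp add: G(1) integrable_lap_mixture integral_lap_mixture)
  also have "\<dots> \<le> (\<integral>b. lap_kl b \<Delta> \<partial>B)"
    by (fact G(2))
  also have "\<dots> = \<Delta> * (\<integral>b. 1 / b \<partial>B) + mgf_inv B (- \<Delta>) - 1"
    by (rule integral_lap_kl[OF \<Delta>])
  finally show "(\<integral>x. lap_mixture a x * ln (lap_mixture a x / lap_mixture c x) \<partial>lborel)
      \<le> \<Delta> * (\<integral>b. 1 / b \<partial>B) + mgf_inv B (- \<Delta>) - 1" .
qed

lemma renyi_div_lap_mixture_le:
  assumes \<alpha>: "1 < \<alpha>" and ac: "\<bar>a - c\<bar> \<le> \<Delta>"
    and mgf: "integrable B (\<lambda>b. exp ((\<alpha> - 1) * \<Delta> / b))"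
  shows "renyi_div \<alpha> (lap_mixture a) (lap_mixture c)
    \<le> ereal (1 / (\<alpha> - 1) * ln ((\<alpha> * mgf_inv B ((\<alpha> - 1) * \<Delta>) + (\<alpha> - 1) * mgf_inv B (- \<alpha> * \<Delta>)) / (2 * \<alpha> - 1)))"
proof -
  let ?F = "\<lambda>x. lap_mixture a x powr \<alpha> * lap_mixture c x powr (1 - \<alpha>)"
  note F = renyi_integral_lap_mixture_le[OF assms]
  have "0 < ?F x" for x
    using lap_mixture_pos[where a=a and x=x] lap_mixture_pos[where a=c and x=x] by simp
  then have "0 < (\<integral>x. ?F x \<partial>lborel)"
    by (intro integral_pos_of_AE_pos F(1) AE_I2) auto
  then have "ln (\<integral>x. ?F x \<partial>lborel)
      \<le> ln ((\<alpha> * mgf_inv B ((\<alpha> - 1) * \<Delta>) + (\<alpha> - 1) * mgf_inv B (- \<alpha> * \<Delta>)) / (2 * \<alpha> - 1))"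
    using F(2) by (intro ln_mono) auto
  then show ?thesis
    using \<alpha> F(1) by (simp add: renyi_div_def divide_right_mono)
qed

lemma kl_div_lap_mixture_le:
  assumes "\<bar>a - c\<bar> \<le> \<Delta>"
  shows "renyi_div 1 (lap_mixture a) (lap_mixture c) \<le> ereal (\<Delta> * (\<integral>b. 1 / b \<partial>B) + mgf_inv B (- \<Delta>) - 1)"
  using kl_integral_lap_mixture_le[OF assms] by (simp add: renyi_div_def)

end

theorem theoremF3:
  fixes B :: "real measure" and q :: "'d \<Rightarrow> real" and adj :: "'d \<Rightarrow> 'd \<Rightarrow> bool"
  assumes "prob_space B" and "sets B = sets borel"
    and "AE b in B. 0 < b"
    and "\<exists>\<delta>>0. \<forall>t. \<bar>t\<bar> < \<delta> \<longrightarrow> integrable B (\<lambda>b. exp (t / b))"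
    and "has_sensitivity adj q 1"
  shows "(\<forall>\<alpha>>1. integrable B (\<lambda>b. exp ((\<alpha> - 1) / b)) \<longrightarrow>
            is_rdp adj (r2dp_laplace_density B q) \<alpha>
              (1 / (\<alpha> - 1) * ln ((\<alpha> * mgf_inv B (\<alpha> - 1) + (\<alpha> - 1) * mgf_inv B (- \<alpha>))
                                   / (2 * \<alpha> - 1))))
       \<and> is_rdp adj (r2dp_laplace_density B q) 1
           (deriv (mgf_inv B) 0 + mgf_inv B (- 1) - 1)"
proof -
  interpret lap_scale_mixture B
    using assms(1-3) integrable_inverse_of_mgf_inv[OF assms(2,4)]
    by (intro lap_scale_mixture.intro lap_scale_mixture_axioms.intro)
  have density: "r2dp_laplace_density B q d = lap_mixture (q d)" for d
    by (simp add: r2dp_laplace_density_def fun_eq_iff)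
  have sensitivity: "\<bar>q d - q d'\<bar> \<le> 1" if "adj d d'" for d d'
    using assms(5) that by (auto simp: has_sensitivity_def)
  show ?thesis
    unfolding is_rdp_def density deriv_mgf_inv_0[OF assms(2,4)]
    using renyi_div_lap_mixture_le[OF _ sensitivity] kl_div_lap_mixture_le[OF sensitivity] by simp
qed

end
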